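(* Let $K$ be an $n$-dimensional oriented, well-centered, manifold-like simplicial complex with boundary $\partial K$ and circumcentric dual complex, and let $p,q$ be positive integers with $p+q=n+1$. Let $\tilde{\mathcal F}^d_{p,q}=\Omega_d^p(K)\times\Omega_d^q(\star_{\mathrm i}K)\times\Omega_d^{n-p}(\partial(\star K))$ and $\tilde{\mathcal E}^d_{p,q}=\Omega_d^{n-p}(\star_{\mathrm i}K)\times\Omega_d^{n-q}(K)\times\Omega_d^{n-q}(\partial K)$, with the symmetric bilinear form $$\langle\!\langle(f_p^1,\hat f_q^1,\hat f_b^1,\hat e_p^1,e_q^1,e_b^1),(f_p^2,\hat f_q^2,\hat f_b^2,\hat e_p^2,e_q^2,e_b^2)\rangle\!\rangle_{\tilde d}=\langle\hat e_p^1\wedge f_p^2+e_q^1\wedge\hat f_q^2+\hat e_p^2\wedge f_p^1+e_q^2\wedge\hat f_q^1,K\rangle+\langle e_b^1\wedge\hat f_b^2+e_b^2\wedge\hat f_b^1,\partial K\rangle .$$ Define $\tilde{\mathcal D}_d\subset\tilde{\mathcal F}^d_{p,q}\times\tilde{\mathcal E}^d_{p,q}$ as the set of $(f_p,\hat f_q,\hat f_b,\hat e_p,e_q,e_b)$ such that $$f_p=(-1)^{pq+1}\mathbf d e_q,\qquad \hat f_q=\mathbf d_{\mathrm i}\hat e_p+\mathbf d_{\mathrm b}\hat f_b,\qquad e_b=(-1)^p\,e_q|_{\partial K}.$$ Then $\tilde{\mathcal D}_d=\tilde{\mathcal D}_d^{\perp}$ with respect to $\langle\!\langle\cdot,\cdot\rangle\!\rangle_{\tilde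 d}$, i.e. $\tilde{\mathcal D}_d$ is a Dirac structure.
   Context: Setting. $K$ is an $n$-dimensional manifold-like simplicial complex (every simplex is a face of some $n$-simplex), oriented ($n$-simplices sharing an $(n-1)$-face are coherently oriented, lower-dimensional simplices are individually oriented) and well-centered (every simplex contains its circumcenter in its interior). $\partial K$ is the $(n-1)$-dimensional boundary subcomplex: the $(n-1)$-simplices that are faces of exactly one $n$-simplex, together with all their faces. For simplices $\sigma^{j-1}\prec\sigma^{j}$ let $[\sigma^{j-1}:\sigma^{j}]\in\{\pm1\}$ be the coefficient of $\sigma^{j-1}$ in $\partial[v_0,\dots,v_j]=\sum_i(-1)^i[v_0,\dots,\widehat{v_i},\dots,v_j]$. Dual cells. Each simplex $\sigma^j\in K$ has a circumcentric interior dual $(n-j)$-cell $\star_{\mathrm i}\sigma^j$; each $\tau^j\in\partial K$ has a boundary dual $(n-1-j)$-cell $\star_{\mathrm b}\tau^j$ (its circumcentric dual within $\partial K$). Discrete forms. $\Omega_d^j(K)$ (resp. $\Omega_d^j(\partial K)$): real functions on the $j$-simplices of $K$ (resp. $\partial K$); $\Omega_d^m(\star_{\mathrm i}K)$: real functions on interior dual $m$-cells $\star_{\mathrm i}\sigma^{n-m}$; $\Omega_d^m(\partial(\star K))$: real functions on boundary dual $m$-cells $\star_{\mathrm b}\tau^{n-1-m}$, $\tau\in\partial K$. For primal $\alpha$, $\alpha|_{\partial K}$ is its restriction to simplices of $\partial K$. Derivatives. Primal: $(\mathbf d\alpha)(\sigma^{j})=\sum_{\sigma^{j-1}\prec\sigma^{j}}[\sigma^{j-1}:\sigma^{j}]\alpha(\sigma^{j-1})$.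 Dual: for $\hat\beta_{\mathrm i}\in\Omega_d^{m}(\star_{\mathrm i}K)$, $\hat\beta_{\mathrm b}\in\Omega_d^{m}(\partial(\star K))$, $m\le n-1$, with $j=n-m$: $(\mathbf d_{\mathrm i}\hat\beta_{\mathrm i})(\star_{\mathrm i}\sigma^{j-1})=(-1)^{j}\sum_{\sigma^{j}\succ\sigma^{j-1}}[\sigma^{j-1}:\sigma^{j}]\hat\beta_{\mathrm i}(\star_{\mathrm i}\sigma^{j})$, and $(\mathbf d_{\mathrm b}\hat\beta_{\mathrm b})(\star_{\mathrm i}\sigma^{j-1})=(-1)^{j-1}\hat\beta_{\mathrm b}(\star_{\mathrm b}\sigma^{j-1})$ if $\sigma^{j-1}\in\partial K$, $0$ otherwise; both lie in $\Omega_d^{m+1}(\star_{\mathrm i}K)$. Wedge pairings (extended bilinearly). For $\alpha\in\Omega_d^j(K)$, $\hat\beta\in\Omega_d^{n-j}(\star_{\mathrm i}K)$: $\langle\alpha\wedge\hat\beta,K\rangle=\sum_{\sigma^j\in K}\alpha(\sigma^j)\hat\beta(\star_{\mathrm i}\sigma^j)$, $\langle\hat\beta\wedge\alpha,K\rangle=(-1)^{j(n-j)}\langle\alpha\wedge\hat\beta,K\rangle$. For $\alpha\in\Omega_d^j(\partial K)$, $\hat\gamma\in\Omega_d^{n-1-j}(\partial(\star K))$: $\langle\alpha\wedge\hat\gamma,\partial K\rangle=\sum_{\tau^j\in\partial K}\alpha(\tau^j)\hat\gamma(\star_{\mathrm b}\tau^j)$, $\langle\hat\gamma\wedge\alpha,\partial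 K\rangle=(-1)^{j(n-1-j)}\langle\alpha\wedge\hat\gamma,\partial K\rangle$. A Dirac structure is a linear subspace $\mathcal D\subset\mathcal F\times\mathcal E$ with $\mathcal D=\mathcal D^\perp$ for the given symmetric bilinear form. *)

theory Defs
  imports "HOL-Analysis.Analysis"
begin

text \<open>Simplices are nonempty finite vertex sets; vertices carry a linear order,
  and the orientation of a simplex is encoded by a sign relative to the
  increasing vertex order.  Discrete forms (primal and dual) are real functions
  on simplices; a dual cell is indexed by the primal simplex it is dual to.\<close>

type_synonym 'v dform = "'v set \<Rightarrow> real"

definition simplices :: "'v set set \<Rightarrow> nat \<Rightarrow> 'v set set" where
  "simplices K j = {\<sigma> \<in> K. card \<sigma> = Suc j}"

definition abstract_complex :: "'v set set \<Rightarrow> bool" where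
  "abstract_complex K \<longleftrightarrow> finite K \<and> (\<forall>\<sigma>\<in>K. finite \<sigma> \<and> \<sigma> \<noteq> {})
     \<and> (\<forall>\<sigma>\<in>K. \<forall>\<tau>. \<tau> \<subseteq> \<sigma> \<and> \<tau> \<noteq> {} \<longrightarrow> \<tau> \<in> K)"

definition manifold_like :: "'v set set \<Rightarrow> nat \<Rightarrow> bool" where
  "manifold_like K n \<longleftrightarrow> abstract_complex K \<and> (\<forall>\<sigma>\<in>K. \<exists>s\<in>simplices K n. \<sigma> \<subseteq> s)"

text \<open>Incidence number [tau : sigma]: with sorted vertices v_0 < ... < v_j of sigma,
  removing v_i gives sign (-1)^i, multiplied by the orientation signs.\<close>
definition incidence :: "('v::linorder set \<Rightarrow> real) \<Rightarrow> 'v set \<Rightarrow> 'v set \<Rightarrow> real" where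
  "incidence ori \<tau> \<sigma> = (if \<tau> \<subseteq> \<sigma> \<and> finite \<sigma> \<and> card \<sigma> = Suc (card \<tau>)
     then ori \<tau> * ori \<sigma> * (-1) ^ card {w \<in> \<sigma>. w < the_elem (\<sigma> - \<tau>)} else 0)"

definition oriented :: "'v::linorder set set \<Rightarrow> nat \<Rightarrow> ('v set \<Rightarrow> real) \<Rightarrow> bool" where
  "oriented K n ori \<longleftrightarrow> (\<forall>\<sigma>\<in>K. ori \<sigma> = 1 \<or> ori \<sigma> = -1)
     \<and> (\<forall>\<tau>\<in>simplices K (n - 1). \<forall>\<sigma>1\<in>simplices K n. \<forall>\<sigma>2\<in>simplices K n.
          \<tau> \<subseteq> \<sigma>1 \<and> \<tau> \<subseteq> \<sigma>2 \<and> \<sigma>1 \<noteq> \<sigma>2 \<longrightarrow> incidence ori \<tau> \<sigma>1 = - incidence ori \<tau> \<sigma>2)"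

definition well_centered :: "'v set set \<Rightarrow> ('v \<Rightarrow> 'a::euclidean_space) \<Rightarrow> bool" where
  "well_centered K pos \<longleftrightarrow>
     (\<forall>\<sigma>\<in>K. inj_on pos \<sigma> \<and> \<not> affine_dependent (pos ` \<sigma>)
        \<and> (\<exists>c \<in> rel_interior (convex hull (pos ` \<sigma>)). \<exists>r. \<forall>v\<in>\<sigma>. dist c (pos v) = r))
   \<and> (\<forall>\<sigma>\<in>K. \<forall>\<tau>\<in>K. convex hull (pos ` \<sigma>) \<inter> convex hull (pos ` \<tau>) = convex hull (pos ` (\<sigma> \<inter> \<tau>)))"

definition boundary :: "'v set set \<Rightarrow> nat \<Rightarrow> 'v set set" where
  "boundary K n = {\<tau> \<in> K. \<exists>\<rho>\<in>simplices K (n - 1). \<tau> \<subseteq> \<rho> \<and> card {\<sigma> \<in> simplices K n. \<rho> \<subseteq> \<sigma>} = 1}"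

definition Omega :: "'v set set \<Rightarrow> nat \<Rightarrow> 'v dform set" where
  "Omega S j = {\<alpha>. \<forall>s. s \<notin> simplices S j \<longrightarrow> \<alpha> s = 0}"

text \<open>Interior dual m-forms: functions on the cells star_i sigma^(n-m).\<close>
definition Omega_dual_i :: "'v set set \<Rightarrow> nat \<Rightarrow> nat \<Rightarrow> 'v dform set" where
  "Omega_dual_i K n m = Omega K (n - m)"

text \<open>Boundary dual m-forms: functions on the cells star_b tau^(n-1-m), tau in boundary.\<close>
definition Omega_dual_b :: "'v set set \<Rightarrow> nat \<Rightarrow> nat \<Rightarrow> 'v dform set" where
  "Omega_dual_b K n m = Omega (boundary K n) (n - 1 - m)"

definition dprim :: "'v::linorder set set \<Rightarrow> ('v set \<Rightarrow> real) \<Rightarrow> nat \<Rightarrow> 'v dform \<Rightarrow> 'v dform" where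
  "dprim K ori j \<alpha> = (\<lambda>\<sigma>. if \<sigma> \<in> simplices K j
      then (\<Sum>\<tau>\<in>simplices K (j - 1). incidence ori \<tau> \<sigma> * \<alpha> \<tau>) else 0)"

definition d_i :: "'v::linorder set set \<Rightarrow> ('v set \<Rightarrow> real) \<Rightarrow> nat \<Rightarrow> nat \<Rightarrow> 'v dform \<Rightarrow> 'v dform" where
  "d_i K ori n m \<beta> = (\<lambda>\<sigma>. if \<sigma> \<in> simplices K (n - m - 1)
      then (-1) ^ (n - m) * (\<Sum>s\<in>simplices K (n - m). incidence ori \<sigma> s * \<beta> s) else 0)"

definition d_b :: "'v set set \<Rightarrow> nat \<Rightarrow> nat \<Rightarrow> 'v dform \<Rightarrow> 'v dform" where
  "d_b K n m \<beta> = (\<lambda>\<sigma>. if \<sigma> \<in> simplices K (n - m - 1) \<and> \<sigma> \<in> boundary K n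
      then (-1) ^ (n - m - 1) * \<beta> \<sigma> else 0)"

definition restrict_b :: "'v set set \<Rightarrow> nat \<Rightarrow> nat \<Rightarrow> 'v dform \<Rightarrow> 'v dform" where
  "restrict_b K n j \<alpha> = (\<lambda>\<sigma>. if \<sigma> \<in> simplices (boundary K n) j then \<alpha> \<sigma> else 0)"

text \<open>Wedge pairings.  wedge_pd: primal j-form wedge dual (n-j)-form over K;
  wedge_dp: dual (n-j)-form wedge primal j-form over K;
  wedge_bd: boundary primal j-form wedge boundary dual (n-1-j)-form over the boundary.\<close>
definition wedge_pd :: "'v set set \<Rightarrow> nat \<Rightarrow> 'v dform \<Rightarrow> 'v dform \<Rightarrow> real" where
  "wedge_pd K j \<alpha> \<beta> = (\<Sum>\<sigma>\<in>simplices K j. \<alpha> \<sigma> * \<beta> \<sigma>)"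

definition wedge_dp :: "'v set set \<Rightarrow> nat \<Rightarrow> nat \<Rightarrow> 'v dform \<Rightarrow> 'v dform \<Rightarrow> real" where
  "wedge_dp K n j \<beta> \<alpha> = (-1) ^ (j * (n - j)) * wedge_pd K j \<alpha> \<beta>"

definition wedge_bd :: "'v set set \<Rightarrow> nat \<Rightarrow> nat \<Rightarrow> 'v dform \<Rightarrow> 'v dform \<Rightarrow> real" where
  "wedge_bd K n j \<alpha> \<gamma> = (\<Sum>\<tau>\<in>simplices (boundary K n) j. \<alpha> \<tau> * \<gamma> \<tau>)"

type_synonym 'v flow_effort = "('v dform \<times> 'v dform \<times> 'v dform) \<times> ('v dform \<times> 'v dform \<times> 'v dform)"

definition bond_space :: "'v set set \<Rightarrow> nat \<Rightarrow> nat \<Rightarrow> nat \<Rightarrow> 'v flow_effort set" where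
  "bond_space K n p q =
     (Omega K p \<times> Omega_dual_i K n q \<times> Omega_dual_b K n (n - p))
   \<times> (Omega_dual_i K n (n - p) \<times> Omega K (n - q) \<times> Omega (boundary K n) (n - q))"

definition bform :: "'v set set \<Rightarrow> nat \<Rightarrow> nat \<Rightarrow> nat \<Rightarrow> 'v flow_effort \<Rightarrow> 'v flow_effort \<Rightarrow> real" where
  "bform K n p q x y = (case x of ((fp1, fq1, fb1), (ep1, eq1, eb1)) \<Rightarrow>
     case y of ((fp2, fq2, fb2), (ep2, eq2, eb2)) \<Rightarrow>
       wedge_dp K n p ep1 fp2 + wedge_pd K (n - q) eq1 fq2
     + wedge_dp K n p ep2 fp1 + wedge_pd K (n - q) eq2 fq1
     + wedge_bd K n (n - q) eb1 fb2 + wedge_bd K n (n - q) eb2 fb1)"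

definition Dirac_d :: "'v::linorder set set \<Rightarrow> ('v set \<Rightarrow> real) \<Rightarrow> nat \<Rightarrow> nat \<Rightarrow> nat \<Rightarrow> 'v flow_effort set" where
  "Dirac_d K ori n p q = {x \<in> bond_space K n p q. case x of ((fp, fq, fb), (ep, eq, eb)) \<Rightarrow>
       fp = (\<lambda>\<sigma>. (-1) ^ (p * q + 1) * dprim K ori p eq \<sigma>)
     \<and> fq = (\<lambda>\<sigma>. d_i K ori n (n - p) ep \<sigma> + d_b K n (n - p) fb \<sigma>)
     \<and> eb = (\<lambda>\<sigma>. (-1) ^ p * restrict_b K n (n - q) eq \<sigma>)}"

definition orth :: "'a set \<Rightarrow> ('a \<Rightarrow> 'a \<Rightarrow> real) \<Rightarrow> 'a set \<Rightarrow> 'a set" where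
  "orth V B D = {y \<in> V. \<forall>x\<in>D. B x y = 0}"

end

theory Submission
  imports Defs
begin

text \<open>Every element of the discrete Stokes-Dirac subspace is the graph of its efforts
  \<open>(e_p, e_q)\<close> and boundary flow \<open>f_b\<close>.  The subspace is isotropic because the primal
  derivative and the interior dual derivative are adjoint up to sign under the wedge
  pairing, while the boundary dual derivative is cancelled by the boundary term.
  Conversely, the pairing of an arbitrary graph with a bond-space element equals a sum of
  wedge products of the graph's parameters with the residuals of the defining equations;
  taking the residuals themselves as parameters gives a sum of squares, so an element
  orthogonal to the subspace has vanishing residuals.\<close>

lemma finite_simplices: "finite K \<Longrightarrow> finite (simplices K j)"
  unfolding simplices_def by simp

lemma simplices_boundary:
  "simplices (boundary K n) j = {\<tau> \<in> simplices K j. \<tau> \<in> boundary K n}"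
  unfolding simplices_def boundary_def by auto

lemma finite_boundary: "finite K \<Longrightarrow> finite (boundary K n)"
  unfolding boundary_def by simp

lemma wedge_bd_eq_wedge_pd: "wedge_bd K n j \<alpha> \<gamma> = wedge_pd (boundary K n) j \<alpha> \<gamma>"
  unfolding wedge_bd_def wedge_pd_def ..

lemma wedge_pd_self_eq_0_iff:
  assumes "finite S" and "\<alpha> \<in> Omega S j"
  shows "wedge_pd S j \<alpha> \<alpha> = 0 \<longleftrightarrow> \<alpha> = (\<lambda>_. 0)"
proof -
  have "wedge_pd S j \<alpha> \<alpha> = 0 \<longleftrightarrow> (\<forall>\<sigma>\<in>simplices S j. \<alpha> \<sigma> = 0)"
    unfolding wedge_pd_def
    by (simp add: sum_nonneg_eq_0_iff finite_simplices[OF assms(1)])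
  with assms(2) show ?thesis
    unfolding Omega_def by (auto simp: fun_eq_iff)
qed

lemma wedge_pd_self_nonneg: "finite S \<Longrightarrow> 0 \<le> wedge_pd S j \<alpha> \<alpha>"
  unfolding wedge_pd_def by (simp add: sum_nonneg)

lemma bform_diff_flows:
  "bform K n p q x ((fp, fq, fb), (ep, eq, eb)) - bform K n p q x ((fp', fq', fb), (ep, eq, eb'))
     = (case x of ((_, _, fbx), (epx, eqx, _)) \<Rightarrow>
          wedge_dp K n p epx (\<lambda>\<sigma>. fp \<sigma> - fp' \<sigma>) + wedge_pd K (n - q) eqx (\<lambda>\<sigma>. fq \<sigma> - fq' \<sigma>)
        + wedge_bd K n (n - q) (\<lambda>\<sigma>. eb \<sigma> - eb' \<sigma>) fbx)"
  by (cases x) (auto simp: bform_def wedge_dp_def wedge_pd_def wedge_bd_def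
      right_diff_distrib left_diff_distrib sum_subtractf)

definition Dirac_graph ::
    "'v::linorder set set \<Rightarrow> ('v set \<Rightarrow> real) \<Rightarrow> nat \<Rightarrow> nat \<Rightarrow> nat
       \<Rightarrow> 'v dform \<Rightarrow> 'v dform \<Rightarrow> 'v dform \<Rightarrow> 'v flow_effort" where
  "Dirac_graph K ori n p q ep eq fb =
     ((\<lambda>\<sigma>. (-1) ^ (p * q + 1) * dprim K ori p eq \<sigma>,
       \<lambda>\<sigma>. d_i K ori n (n - p) ep \<sigma> + d_b K n (n - p) fb \<sigma>, fb),
      (ep, eq, \<lambda>\<sigma>. (-1) ^ p * restrict_b K n (n - q) eq \<sigma>))"

lemma Dirac_d_iff_graph:
  "((fp, fq, fb), (ep, eq, eb)) \<in> Dirac_d K ori n p q \<longleftrightarrow>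
     ((fp, fq, fb), (ep, eq, eb)) \<in> bond_space K n p q
     \<and> ((fp, fq, fb), (ep, eq, eb)) = Dirac_graph K ori n p q ep eq fb"
  unfolding Dirac_d_def Dirac_graph_def by auto

locale Stokes_Dirac =
  fixes K :: "'v::linorder set set" and ori :: "'v set \<Rightarrow> real" and n p q :: nat
  assumes finite_K: "finite K"
    and p_pos: "1 \<le> p" and q_pos: "1 \<le> q" and degree_sum: "p + q = n + 1"
begin

lemma degrees: "n - q = p - 1" "n - (n - p) = p" "n - Suc (n - p) = p - 1"
  using p_pos q_pos degree_sum by auto

lemma wedge_dp_dprim_sign: "(-1::real) ^ (p * (n - p)) * (-1) ^ (p * q + 1) = - ((-1) ^ p)"
proof -
  have "n - p = q - 1"
    using degree_sum by simp
  with q_pos have "p * (n - p) + (p * q + 1) = 2 * (p * (q - 1)) + p + 1"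
    by (cases q) (simp_all add: algebra_simps)
  then have "(-1::real) ^ (p * (n - p)) * (-1) ^ (p * q + 1) = (-1) ^ (2 * (p * (q - 1)) + p + 1)"
    by (simp only: power_add[symmetric])
  also have "\<dots> = - ((-1) ^ p)"
    by (simp only: power_add power_mult) simp
  finally show ?thesis .
qed

lemma wedge_dprim_d_i_cancel:
  "wedge_dp K n p ep (\<lambda>\<sigma>. (-1) ^ (p * q + 1) * dprim K ori p eq \<sigma>)
     + wedge_pd K (n - q) eq (d_i K ori n (n - p) ep) = 0"
proof -
  let ?S = "\<Sum>s\<in>simplices K p. \<Sum>\<tau>\<in>simplices K (p - 1). incidence ori \<tau> s * eq \<tau> * ep s"
  have "wedge_dp K n p ep (\<lambda>\<sigma>. (-1) ^ (p * q + 1) * dprim K ori p eq \<sigma>) = - ((-1) ^ p) * ?S"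
    unfolding wedge_dp_def wedge_pd_def dprim_def wedge_dp_dprim_sign[symmetric]
    by (simp add: sum_distrib_left sum_distrib_right mult_ac)
  moreover have "wedge_pd K (n - q) eq (d_i K ori n (n - p) ep) = (-1) ^ p * ?S"
    unfolding wedge_pd_def d_i_def degrees
    by (subst sum.swap) (simp add: sum_distrib_left mult_ac)
  ultimately show ?thesis by simp
qed

lemma wedge_d_b_restrict_cancel:
  "wedge_pd K (n - q) eq (d_b K n (n - p) fb)
     + wedge_bd K n (n - q) (\<lambda>\<sigma>. (-1) ^ p * restrict_b K n (n - q) eq \<sigma>) fb = 0"
proof -
  let ?B = "simplices (boundary K n) (p - 1)"
  have "wedge_pd K (n - q) eq (d_b K n (n - p) fb) = (-1) ^ (p - 1) * (\<Sum>\<tau>\<in>?B. eq \<tau> * fb \<tau>)"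
    unfolding wedge_pd_def d_b_def degrees simplices_boundary
    by (simp add: sum.inter_filter[symmetric] finite_simplices[OF finite_K] sum_distrib_left
        if_distrib[of "\<lambda>x. _ * x"] mult_ac cong: if_cong)
  moreover have "wedge_bd K n (n - q) (\<lambda>\<sigma>. (-1) ^ p * restrict_b K n (n - q) eq \<sigma>) fb
      = (-1) ^ p * (\<Sum>\<tau>\<in>?B. eq \<tau> * fb \<tau>)"
    unfolding wedge_bd_def restrict_b_def degrees by (simp add: sum_distrib_left mult_ac)
  moreover have "(-1::real) ^ (p - 1) = - ((-1) ^ p)"
    using p_pos by (cases p) simp_all
  ultimately show ?thesis by simp
qed

lemma bform_Dirac_graph_isotropic:
  "bform K n p q (Dirac_graph K ori n p q ep1 eq1 fb1) (Dirac_graph K ori n p q ep2 eq2 fb2) = 0"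
  using wedge_dprim_d_i_cancel[of ep1 eq2] wedge_dprim_d_i_cancel[of ep2 eq1]
    wedge_d_b_restrict_cancel[of eq1 fb2] wedge_d_b_restrict_cancel[of eq2 fb1]
  unfolding bform_def Dirac_graph_def d_i_def d_b_def wedge_pd_def
  by (simp add: distrib_left sum.distrib) 

lemma Dirac_graph_in_Dirac_d:
  assumes "ep \<in> Omega K p" and "eq \<in> Omega K (p - 1)" and "fb \<in> Omega (boundary K n) (p - 1)"
  shows "Dirac_graph K ori n p q ep eq fb \<in> Dirac_d K ori n p q"
  using assms
  by (auto simp: Dirac_d_def Dirac_graph_def bond_space_def Omega_dual_i_def Omega_dual_b_def
      Omega_def degrees dprim_def d_i_def d_b_def restrict_b_def)

lemma Dirac_d_obtain_graph:
  assumes "x \<in> Dirac_d K ori n p q"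
  obtains ep eq fb where "x = Dirac_graph K ori n p q ep eq fb"
  using assms by (auto simp: Dirac_d_def Dirac_graph_def split: prod.splits)

lemma Dirac_d_subset_orth:
  "Dirac_d K ori n p q \<subseteq> orth (bond_space K n p q) (bform K n p q) (Dirac_d K ori n p q)"
proof
  fix y assume y: "y \<in> Dirac_d K ori n p q"
  have "bform K n p q x y = 0" if "x \<in> Dirac_d K ori n p q" for x
    using that y by (metis Dirac_d_obtain_graph bform_Dirac_graph_isotropic)
  with y show "y \<in> orth (bond_space K n p q) (bform K n p q) (Dirac_d K ori n p q)"
    by (auto simp: orth_def Dirac_d_def)
qed

lemma orth_subset_Dirac_d:
  "orth (bond_space K n p q) (bform K n p q) (Dirac_d K ori n p q) \<subseteq> Dirac_d K ori n p q"
proof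
  fix y assume "y \<in> orth (bond_space K n p q) (bform K n p q) (Dirac_d K ori n p q)"
  then have y_bond: "y \<in> bond_space K n p q"
    and y_orth: "\<And>x. x \<in> Dirac_d K ori n p q \<Longrightarrow> bform K n p q x y = 0"
    unfolding orth_def by auto
  obtain fp fq fb ep eq eb where y_def: "y = ((fp, fq, fb), (ep, eq, eb))"
    by (cases y) auto
  define a where "a = (\<lambda>\<sigma>. fp \<sigma> - (-1) ^ (p * q + 1) * dprim K ori p eq \<sigma>)"
  define b where "b = (\<lambda>\<sigma>. fq \<sigma> - (d_i K ori n (n - p) ep \<sigma> + d_b K n (n - p) fb \<sigma>))"
  define c where "c = (\<lambda>\<sigma>. eb \<sigma> - (-1) ^ p * restrict_b K n (n - q) eq \<sigma>)"
  \<comment> \<open>The test element: the graph whose parameters are the residuals of \<open>y\<close>.\<close>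
  define s :: real where "s = (-1) ^ (p * (n - p))"
  have a_form: "a \<in> Omega K p" and b_form: "b \<in> Omega K (p - 1)"
    and c_form: "c \<in> Omega (boundary K n) (p - 1)"
    using y_bond
    by (auto simp: y_def a_def b_def c_def bond_space_def Omega_dual_i_def Omega_dual_b_def
        Omega_def degrees dprim_def d_i_def d_b_def restrict_b_def)
  have "(\<lambda>\<sigma>. s * a \<sigma>) \<in> Omega K p"
    using a_form by (simp add: Omega_def)
  then have test: "Dirac_graph K ori n p q (\<lambda>\<sigma>. s * a \<sigma>) b c \<in> Dirac_d K ori n p q"
    using b_form c_form by (rule Dirac_graph_in_Dirac_d)
  have "wedge_dp K n p (\<lambda>\<sigma>. s * a \<sigma>) a = wedge_pd K p a a"
    by (simp add: wedge_dp_def wedge_pd_def s_def sum_distrib_left mult_ac flip: power_mult_distrib)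
  then have "wedge_pd K p a a + wedge_pd K (p - 1) b b + wedge_pd (boundary K n) (p - 1) c c
      = wedge_dp K n p (\<lambda>\<sigma>. s * a \<sigma>) a + wedge_pd K (n - q) b b + wedge_bd K n (n - q) c c"
    by (simp add: degrees wedge_bd_eq_wedge_pd)
  also have "\<dots> = bform K n p q (Dirac_graph K ori n p q (\<lambda>\<sigma>. s * a \<sigma>) b c) y
        - bform K n p q (Dirac_graph K ori n p q (\<lambda>\<sigma>. s * a \<sigma>) b c) (Dirac_graph K ori n p q ep eq fb)"
    by (simp only: y_def Dirac_graph_def bform_diff_flows prod.case a_def b_def c_def)
  also have "\<dots> = 0"
    using y_orth[OF test] bform_Dirac_graph_isotropic by simp
  finally have "wedge_pd K p a a + wedge_pd K (p - 1) b b + wedge_pd (boundary K n) (p - 1) c c = 0" .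
  moreover have "0 \<le> wedge_pd K p a a" "0 \<le> wedge_pd K (p - 1) b b"
    "0 \<le> wedge_pd (boundary K n) (p - 1) c c"
    using finite_K finite_boundary[OF finite_K] by (simp_all add: wedge_pd_self_nonneg)
  ultimately have "wedge_pd K p a a = 0" "wedge_pd K (p - 1) b b = 0"
    "wedge_pd (boundary K n) (p - 1) c c = 0"
    by linarith+
  then have "a = (\<lambda>_. 0)" "b = (\<lambda>_. 0)" "c = (\<lambda>_. 0)"
    using a_form b_form c_form finite_K finite_boundary[OF finite_K]
    by (simp_all add: wedge_pd_self_eq_0_iff)
  then have "y = Dirac_graph K ori n p q ep eq fb"
    by (auto simp: y_def Dirac_graph_def a_def b_def c_def fun_eq_iff eq_neg_iff_add_eq_0)
  with y_bond show "y \<in> Dirac_d K ori n p q"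
    unfolding y_def Dirac_d_iff_graph by blast
qed

end

theorem theorem3:
  fixes K :: "'v::linorder set set" and ori :: "'v set \<Rightarrow> real"
    and pos :: "'v \<Rightarrow> 'a::euclidean_space" and n p q :: nat
  assumes "manifold_like K n" and "oriented K n ori" and "well_centered K pos"
    and "p \<ge> 1" and "q \<ge> 1" and "p + q = n + 1"
  shows "Dirac_d K ori n p q = orth (bond_space K n p q) (bform K n p q) (Dirac_d K ori n p q)"
proof -
  have "finite K"
    using assms(1) unfolding manifold_like_def abstract_complex_def by simp
  then interpret Stokes_Dirac K ori n p q
    using assms(4-6) by unfold_locales
  show ?thesis
    using Dirac_d_subset_orth orth_subset_Dirac_d by (rule subset_antisym)
qed

end
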